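(* Let $p=0$, $0<q<1$, $0<\theta<1$ and $\varepsilon>0$. For $d>0$ and $\alpha\in(q,\ e^{-d}+(1-e^{-d})q)$ let \[ b_1(\alpha,d)=\frac{\theta}{1-\theta}\frac{1}{d\,D_{\mathrm{KL}}(\alpha\|q)},\qquad b_2(\alpha,d)=\frac{1}{1-\theta}\frac{1}{d\,D_{\mathrm{KL}}\big(\alpha\|e^{-d}+(1-e^{-d})q\big)}, \] and $m_{\mathrm{COMP},Z}=\min_{\alpha,d}\max\{b_1(\alpha,d),b_2(\alpha,d)\}\,k\log(n/k)$. If $m>(1+\varepsilon)m_{\mathrm{COMP},Z}$, then (with $d,\alpha$ chosen suitably) noisy COMP recovers $\sigma$ with high probability given $G$ and $\hat\sigma$.
   Context: Noisy group testing model (Z channel): $n$ individuals, $k\sim n^{\theta}$ infected; $\sigma\in\{0,1\}^n$ uniformly random of Hamming weight $k$. Constant-column design $G$: $m=ck\log(n/k)$ tests, each individual independently assigned to exactly $\Delta=cd\log(n/k)$ distinct tests chosen uniformly at random. A test is truly positive iff it contains an infected individual. Displayed results $\hat\sigma$: independently, a truly negative test is displayed positive with probability $p$ (here $p=0$), a truly positive test is displayed negative with probability $q$. Noisy COMP with threshold $\alpha$: declare healthy every individual appearing in at least $\alpha\Delta$ displayed negative tests, the rest infected. $\log$ natural; $D_{\mathrm{KL}}(r\|s)=r\log(r/s)+(1-r)\log\frac{1-r}{1-s}$. "With high probability": probability $\to1$ as $n\to\infty$. *)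

theory Defs
  imports "HOL-Probability.Probability" "HOL-Library.Landau_Symbols"
begin

definition DKL :: "real \<Rightarrow> real \<Rightarrow> real" where
  "DKL r s = r * ln (r / s) + (1 - r) * ln ((1 - r) / (1 - s))"

definition b1 :: "real \<Rightarrow> real \<Rightarrow> real \<Rightarrow> real \<Rightarrow> real" where
  "b1 \<theta> q \<alpha> d = \<theta> / (1 - \<theta>) * (1 / (d * DKL \<alpha> q))"

definition b2 :: "real \<Rightarrow> real \<Rightarrow> real \<Rightarrow> real \<Rightarrow> real" where
  "b2 \<theta> q \<alpha> d = 1 / (1 - \<theta>) * (1 / (d * DKL \<alpha> (exp (- d) + (1 - exp (- d)) * q)))"

definition admissible :: "real \<Rightarrow> real \<Rightarrow> real \<Rightarrow> bool" where
  "admissible q \<alpha> d \<longleftrightarrow> d > 0 \<and> q < \<alpha> \<and> \<alpha> < exp (- d) + (1 - exp (- d)) * q"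

text \<open>The constant in front of k log(n/k) in m_COMP,Z (min over alpha, d, taken as infimum).\<close>
definition mCOMP_coeff :: "real \<Rightarrow> real \<Rightarrow> real" where
  "mCOMP_coeff \<theta> q = Inf {max (b1 \<theta> q \<alpha> d) (b2 \<theta> q \<alpha> d) | \<alpha> d. admissible q \<alpha> d}"

text \<open>Test a is displayed negative: with p = 0, a truly negative test is always displayed
  negative; a truly positive test is displayed negative iff its flip bit F a is set
  (which happens independently with probability q).\<close>
definition displayed_neg :: "nat set \<Rightarrow> (nat \<Rightarrow> nat set) \<Rightarrow> (nat \<Rightarrow> bool) \<Rightarrow> nat \<Rightarrow> bool" where
  "displayed_neg S G F a \<longleftrightarrow> (\<forall>i\<in>S. a \<notin> G i) \<or> F a"

definition noisy_COMP :: "nat \<Rightarrow> nat \<Rightarrow> real \<Rightarrow> nat set \<Rightarrow> (nat \<Rightarrow> nat set) \<Rightarrow> (nat \<Rightarrow> bool) \<Rightarrow> nat set" where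
  "noisy_COMP n \<Delta> \<alpha> S G F =
     {i. i < n \<and> \<not> (real (card {a \<in> G i. displayed_neg S G F a}) \<ge> \<alpha> * real \<Delta>)}"

text \<open>Joint law: sigma uniform among k-subsets of the n individuals; constant-column design
  (each individual independently picks Delta distinct tests among m uniformly);
  independent Z-channel flips with probability q per test.\<close>
definition gt_space :: "nat \<Rightarrow> nat \<Rightarrow> nat \<Rightarrow> nat \<Rightarrow> real \<Rightarrow>
    (nat set \<times> (nat \<Rightarrow> nat set) \<times> (nat \<Rightarrow> bool)) pmf" where
  "gt_space n k m \<Delta> q =
     pair_pmf (pmf_of_set {S. S \<subseteq> {..<n} \<and> card S = k})
       (pair_pmf (Pi_pmf {..<n} {} (\<lambda>_. pmf_of_set {T. T \<subseteq> {..<m} \<and> card T = \<Delta>}))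
                 (Pi_pmf {..<m} False (\<lambda>_. bernoulli_pmf q)))"

definition success_prob :: "nat \<Rightarrow> nat \<Rightarrow> nat \<Rightarrow> nat \<Rightarrow> real \<Rightarrow> real \<Rightarrow> real" where
  "success_prob n k m \<Delta> q \<alpha> =
     measure_pmf.prob (gt_space n k m \<Delta> q) {(S, G, F). noisy_COMP n \<Delta> \<alpha> S G F = S}"

end

theory Submission
  imports Defs "HOL-Real_Asymp.Real_Asymp"
begin

text \<open>Noisy COMP errs only if some infected individual has at least \<open>\<alpha>\<Delta>\<close> displayed
  negative tests or some healthy one has fewer. The tests of an infected individual are
  displayed negative independently with probability \<open>q < \<alpha>\<close>, so a Chernoff bound gives
  \<open>exp (- \<Delta> D_KL(\<alpha>||q))\<close>. A test of a healthy individual contains no infected individual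
  with probability about \<open>\<pi> = (1 - \<Delta>/m)^k \<approx> exp (- d)\<close>; drawing the designs of the other
  individuals one at a time, an occupancy argument shows that the exponential moments of its
  number of displayed negative tests are dominated by those of \<open>Bin(\<Delta>, \<pi> + (1 - \<pi>) q)\<close>, which
  gives \<open>exp (- \<Delta> D_KL(\<alpha>||exp (- d) + (1 - exp (- d)) q))\<close> up to an arbitrarily small loss.
  With \<open>\<Delta> = c d log (n/k)\<close> the union bound over the \<open>k\<close> infected and \<open>n\<close> healthy
  individuals is \<open>k (k/n)^(c d D\<^sub>1) + n (k/n)^(c d D\<^sub>2)\<close>, which tends to \<open>0\<close> as soon as
  \<open>c\<close> exceeds both \<open>b\<^sub>1\<close> and \<open>b\<^sub>2\<close>.\<close>

section \<open>Random test designs and the occupancy bound\<close>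

abbreviation subset_pmf :: "nat \<Rightarrow> nat \<Rightarrow> nat set pmf" where
  "subset_pmf m D \<equiv> pmf_of_set {T. T \<subseteq> {..<m} \<and> card T = D}"

abbreviation design_pmf :: "nat \<Rightarrow> nat \<Rightarrow> nat \<Rightarrow> (nat \<Rightarrow> nat set) pmf" where
  "design_pmf n m D \<equiv> Pi_pmf {..<n} {} (\<lambda>_. subset_pmf m D)"

abbreviation flips_pmf :: "nat \<Rightarrow> real \<Rightarrow> (nat \<Rightarrow> bool) pmf" where
  "flips_pmf m q \<equiv> Pi_pmf {..<m} False (\<lambda>_. bernoulli_pmf q)"

lemma set_subset_pmf:
  assumes "D \<le> m"
  shows "set_pmf (subset_pmf m D) = {T. T \<subseteq> {..<m} \<and> card T = D}"
proof (rule set_pmf_of_set)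
  have "{..<D} \<in> {T. T \<subseteq> {..<m} \<and> card T = D}" using assms by auto
  then show "{T. T \<subseteq> {..<m} \<and> card T = D} \<noteq> {}" by blast
  show "finite {T. T \<subseteq> {..<m} \<and> card T = D}"
    by (rule finite_subset[of _ "Pow {..<m}"]) auto
qed

lemma set_pmf_design_pmf:
  assumes "G \<in> set_pmf (design_pmf n m D)" "i < n" "D \<le> m"
  shows "G i \<subseteq> {..<m}" "card (G i) = D"
proof -
  have "G \<in> PiE_dflt {..<n} {} (set_pmf \<circ> (\<lambda>_. subset_pmf m D))"
    using assms(1) by (subst (asm) set_Pi_pmf) simp_all
  then have "G i \<in> set_pmf (subset_pmf m D)" using assms(2) unfolding PiE_dflt_def by auto
  then show "G i \<subseteq> {..<m}" "card (G i) = D" using set_subset_pmf[OF assms(3)] by auto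
qed

lemma sum_card_subsets_insert:
  assumes "finite M" "a \<notin> M"
  shows "(\<Sum>T | T \<subseteq> insert a M \<and> card T = Suc D. f T)
       = (\<Sum>T | T \<subseteq> M \<and> card T = Suc D. f T) + (\<Sum>T | T \<subseteq> M \<and> card T = D. f (insert a T))"
proof -
  let ?A = "{T. T \<subseteq> M \<and> card T = Suc D}" and ?B = "{T. T \<subseteq> M \<and> card T = D}"
  have split: "{T. T \<subseteq> insert a M \<and> card T = Suc D} = ?A \<union> insert a ` ?B"
  proof (intro equalityI subsetI)
    fix T assume T: "T \<in> {T. T \<subseteq> insert a M \<and> card T = Suc D}"
    show "T \<in> ?A \<union> insert a ` ?B"
    proof (cases "a \<in> T")
      case True
      then have "T = insert a (T - {a})" "T - {a} \<in> ?B" using T by auto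
      then show ?thesis by blast
    qed (use T in auto)
  next
    fix T assume "T \<in> ?A \<union> insert a ` ?B"
    then show "T \<in> {T. T \<subseteq> insert a M \<and> card T = Suc D}"
    proof (elim UnE imageE)
      fix T' assume "T' \<in> ?B" "T = insert a T'"
      moreover have "finite T'" "a \<notin> T'" using \<open>T' \<in> ?B\<close> assms finite_subset by auto
      ultimately show ?thesis by auto
    qed auto
  qed
  have "inj_on (insert a) ?B"
    using assms(2) by (intro inj_onI) (metis Diff_insert_absorb in_mono mem_Collect_eq)
  moreover have "?A \<inter> insert a ` ?B = {}" using assms(2) by auto
  moreover have "finite ?A" "finite ?B" using assms(1) by simp_all
  ultimately show ?thesis unfolding split by (simp add: sum.union_disjoint sum.reindex)
qed

lemma sum_card_subsets_insert_power_card_diff: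
  fixes \<sigma> :: real
  assumes "a \<notin> M" "finite M" "a \<notin> U" "finite U"
  shows "(\<Sum>T | T \<subseteq> insert a M \<and> card T = Suc D. \<sigma> ^ card (insert a U - T))
       = \<sigma> * (\<Sum>T | T \<subseteq> M \<and> card T = Suc D. \<sigma> ^ card (U - T))
         + (\<Sum>T | T \<subseteq> M \<and> card T = D. \<sigma> ^ card (U - T))"
proof -
  have "card (insert a U - T) = Suc (card (U - T))" if "T \<subseteq> M" for T
  proof -
    have "insert a U - T = insert a (U - T)" "a \<notin> U - T" using that assms(1,3) by auto
    then show ?thesis using assms(4) by simp
  qed
  moreover have "insert a U - insert a T = U - T" for T using assms(3) by auto
  ultimately show ?thesis
    unfolding sum_card_subsets_insert[OF assms(2,1)] by (simp add: sum_distrib_left)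
qed

lemma binomial_Suc_Suc_weighted_le:
  fixes \<sigma> :: real
  assumes "0 \<le> \<sigma>" "\<sigma> \<le> 1" "u < n"
  shows "\<sigma> * real (n choose Suc k) + real (n choose k)
       \<le> real (Suc n choose Suc k) * (\<sigma> + (1 - \<sigma>) * real (Suc k) / real (n - u))"
proof -
  have "real (Suc n choose Suc k) * real (Suc k) = real (Suc n) * real (n choose k)"
    using Suc_times_binomial[of k n] by (metis mult.commute of_nat_mult)
  then have "real (Suc n choose Suc k) * ((1 - \<sigma>) * real (Suc k) / real (Suc n))
      = (1 - \<sigma>) * real (n choose k)"
    by (metis (no_types, lifting) mult.left_commute nonzero_mult_div_cancel_left of_nat_neq_0
              times_divide_eq_right)
  moreover have "real (Suc n choose Suc k) = real (n choose k) + real (n choose Suc k)"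
    by simp
  ultimately have "\<sigma> * real (n choose Suc k) + real (n choose k)
      = real (Suc n choose Suc k) * (\<sigma> + (1 - \<sigma>) * real (Suc k) / real (Suc n))"
    by (simp only: distrib_left) (simp add: algebra_simps)
  also have "\<dots> \<le> real (Suc n choose Suc k) * (\<sigma> + (1 - \<sigma>) * real (Suc k) / real (n - u))"
  proof (intro mult_left_mono add_left_mono)
    have "real (Suc k) / real (Suc n) \<le> real (Suc k) / real (n - u)"
      using assms(3) by (intro divide_left_mono) auto
    then show "(1 - \<sigma>) * real (Suc k) / real (Suc n) \<le> (1 - \<sigma>) * real (Suc k) / real (n - u)"
      using assms(2) mult_left_mono[of _ _ "1 - \<sigma>"] by fastforce
  qed simp
  finally show ?thesis .
qed

text \<open>For a uniformly random \<open>D\<close>-subset \<open>T\<close> of \<open>M\<close>, this bounds the mean of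
  \<open>\<sigma> ^ card (U - T)\<close> as if the elements of \<open>U\<close> were hit independently, each with
  probability \<open>D / (card M - card U)\<close>.\<close>

lemma sum_card_subsets_power_card_diff_le:
  fixes \<sigma> :: real
  assumes "finite M" "U \<subseteq> M" "card U < card M" "0 \<le> \<sigma>" "\<sigma> \<le> 1"
  shows "(\<Sum>T | T \<subseteq> M \<and> card T = D. \<sigma> ^ card (U - T))
          \<le> real (card M choose D) * (\<sigma> + (1 - \<sigma>) * real D / real (card M - card U)) ^ card U"
  using finite_subset[OF assms(2,1)] assms
proof (induction U arbitrary: M D rule: finite_induct)
  case (empty M D)
  then show ?case by (simp add: n_subsets)
next
  case (insert a U M D)
  obtain M' where M: "M = insert a M'" "a \<notin> M'"
    using insert.prems(2) by (meson insert_subset mk_disjoint_insert)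
  have M': "finite M'" "card M = Suc (card M')" using M insert.prems(1) by auto
  have U: "U \<subseteq> M'" "card (insert a U) = Suc (card U)" "card U < card M'"
    using insert.hyps insert.prems(2,3) M M' by auto
  define x where "x D = \<sigma> + (1 - \<sigma>) * real D / real (card M' - card U)" for D
  have IH: "(\<Sum>T | T \<subseteq> M' \<and> card T = D. \<sigma> ^ card (U - T)) \<le> real (card M' choose D) * x D ^ card U"
    for D
    unfolding x_def using M'(1) U(1,3) insert.prems(4,5) by (rule insert.IH)
  have x_nonneg: "0 \<le> x D" for D unfolding x_def using insert.prems(4,5) by simp
  have x_mono: "x D \<le> x (Suc D)" for D
    unfolding x_def using insert.prems(5) by (intro add_left_mono mult_left_mono divide_right_mono) auto
  show ?case
  proof (cases D)
    case 0
    have "{T. T \<subseteq> M \<and> card T = 0} = {{}}"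
      using insert.prems(1) by (auto dest: finite_subset)
    then show ?thesis using 0 by simp
  next
    case (Suc D')
    have "(\<Sum>T | T \<subseteq> M \<and> card T = D. \<sigma> ^ card (insert a U - T))
        = \<sigma> * (\<Sum>T | T \<subseteq> M' \<and> card T = D. \<sigma> ^ card (U - T))
          + (\<Sum>T | T \<subseteq> M' \<and> card T = D'. \<sigma> ^ card (U - T))"
      unfolding Suc M(1) using M(2) M'(1) insert.hyps(2,1) by (rule sum_card_subsets_insert_power_card_diff)
    also have "\<dots> \<le> \<sigma> * (real (card M' choose D) * x D ^ card U) + real (card M' choose D') * x D ^ card U"
    proof (intro add_mono mult_left_mono)
      have "x D' ^ card U \<le> x D ^ card U"
        unfolding Suc by (intro power_mono x_mono x_nonneg)
      then show "(\<Sum>T | T \<subseteq> M' \<and> card T = D'. \<sigma> ^ card (U - T)) \<le> real (card M' choose D') * x D ^ card U"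
        using IH[of D'] by (meson mult_left_mono of_nat_0_le_iff order_trans)
    qed (use IH[of D] insert.prems(4) in simp_all)
    also have "\<dots> = (\<sigma> * real (card M' choose D) + real (card M' choose D')) * x D ^ card U"
      by (simp only: distrib_right mult.assoc)
    also have "\<dots> \<le> real (card M choose D) * x D * x D ^ card U"
      unfolding x_def Suc M'(2) using insert.prems(4,5) U(3) x_nonneg
      by (intro mult_right_mono binomial_Suc_Suc_weighted_le) auto
    also have "\<dots> = real (card M choose D)
        * (\<sigma> + (1 - \<sigma>) * real D / real (card M - card (insert a U))) ^ card (insert a U)"
      unfolding x_def U(2) M'(2) by simp
    finally show ?thesis .
  qed
qed

lemma nn_integral_subset_pmf_power_card_diff_le:
  fixes \<sigma> :: real
  assumes "U \<subseteq> {..<m}" "card U \<le> D" "D < m" "0 \<le> \<sigma>" "\<sigma> \<le> 1"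
  shows "(\<integral>\<^sup>+ T. ennreal (\<sigma> ^ card (U - T)) \<partial>subset_pmf m D)
           \<le> ennreal ((\<sigma> + (1 - \<sigma>) * (real D / real (m - D))) ^ card U)"
proof -
  let ?S = "{T. T \<subseteq> {..<m} \<and> card T = D}"
  have "{..<D} \<in> ?S" using assms(3) by auto
  then have S: "?S \<noteq> {}" by blast
  have S': "finite ?S" "card ?S = m choose D"
    using n_subsets[of "{..<m}" D] by (auto intro: finite_subset[of _ "Pow {..<m}"])
  have pos: "real (m choose D) > 0" using assms(3) by simp
  have "(\<integral>\<^sup>+ T. ennreal (\<sigma> ^ card (U - T)) \<partial>subset_pmf m D)
        = ennreal ((\<Sum>T\<in>?S. \<sigma> ^ card (U - T)) / real (m choose D))"
    using S S' assms(4) pos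
    by (simp add: nn_integral_pmf_of_set sum_ennreal divide_ennreal sum_nonneg
                  ennreal_of_nat_eq_real_of_nat)
  also have "\<dots> \<le> ennreal ((\<sigma> + (1 - \<sigma>) * (real D / real (m - D))) ^ card U)"
  proof (rule ennreal_leI)
    have "(\<Sum>T\<in>?S. \<sigma> ^ card (U - T))
          \<le> real (m choose D) * (\<sigma> + (1 - \<sigma>) * real D / real (m - card U)) ^ card U"
      using sum_card_subsets_power_card_diff_le[of "{..<m}" U \<sigma> D] assms by simp
    also have "\<dots> \<le> real (m choose D) * (\<sigma> + (1 - \<sigma>) * (real D / real (m - D))) ^ card U"
    proof (intro mult_left_mono power_mono)
      have "real D / real (m - card U) \<le> real D / real (m - D)"
        using assms by (intro divide_left_mono) auto
      then show "\<sigma> + (1 - \<sigma>) * real D / real (m - card U) \<le> \<sigma> + (1 - \<sigma>) * (real D / real (m - D))"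
        using assms(5) mult_left_mono[of _ _ "1 - \<sigma>"] by fastforce
    qed (use assms(4,5) in auto)
    finally show "(\<Sum>T\<in>?S. \<sigma> ^ card (U - T)) / real (m choose D)
        \<le> (\<sigma> + (1 - \<sigma>) * (real D / real (m - D))) ^ card U"
      using pos by (simp add: divide_le_eq mult.commute)
  qed
  finally show ?thesis .
qed

text \<open>Drawing the subsets one at a time, each draw replaces \<open>\<sigma>\<close> by
  \<open>\<sigma> + (1 - \<sigma>) D / (m - D)\<close>, i.e.\ multiplies \<open>1 - \<sigma>\<close> by \<open>1 - D / (m - D)\<close>.\<close>

lemma nn_integral_Pi_subset_pmf_power_card_diff_le:
  fixes \<sigma> :: real
  assumes "finite S" "U \<subseteq> {..<m}" "card U \<le> D" "2 * D < m" "0 \<le> \<sigma>" "\<sigma> \<le> 1"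
  shows "(\<integral>\<^sup>+ G. ennreal (\<sigma> ^ card (U - (\<Union>j\<in>S. G j))) \<partial>Pi_pmf S {} (\<lambda>_. subset_pmf m D))
          \<le> ennreal ((1 - (1 - \<sigma>) * (1 - real D / real (m - D)) ^ card S) ^ card U)"
  using assms(1-3)
proof (induction S arbitrary: U rule: finite_induct)
  case empty
  then show ?case by simp
next
  case (insert x S U)
  define \<delta> where "\<delta> = real D / real (m - D)"
  define g where "g = 1 - (1 - \<sigma>) * (1 - \<delta>) ^ card S"
  have \<delta>: "0 \<le> \<delta>" "\<delta> \<le> 1" unfolding \<delta>_def using assms(4) by (auto simp: divide_le_eq)
  have g: "0 \<le> g" "g \<le> 1"
    unfolding g_def using assms(5,6) \<delta> by (auto intro!: mult_le_one power_le_one)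
  have "(\<integral>\<^sup>+ G. ennreal (\<sigma> ^ card (U - (\<Union>j\<in>insert x S. G j))) \<partial>Pi_pmf (insert x S) {} (\<lambda>_. subset_pmf m D))
      = (\<integral>\<^sup>+ y. \<integral>\<^sup>+ f. ennreal (\<sigma> ^ card ((U - y) - (\<Union>j\<in>S. f j))) \<partial>Pi_pmf S {} (\<lambda>_. subset_pmf m D) \<partial>subset_pmf m D)"
  proof -
    have "U - (\<Union>j\<in>insert x S. (f(x := y)) j) = (U - y) - (\<Union>j\<in>S. f j)" for f :: "_ \<Rightarrow> nat set" and y
      using insert.hyps(2) by auto
    then show ?thesis
      by (simp add: Pi_pmf_insert[OF insert.hyps] nn_integral_pair_pmf' case_prod_unfold del: fun_upd_apply)
  qed
  also have "\<dots> \<le> (\<integral>\<^sup>+ y. ennreal (g ^ card (U - y)) \<partial>subset_pmf m D)"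
  proof (intro nn_integral_mono)
    fix y :: "nat set"
    have "card (U - y) \<le> card U"
      using insert.prems(1) by (intro card_mono) (auto intro: finite_subset)
    then show "(\<integral>\<^sup>+ f. ennreal (\<sigma> ^ card ((U - y) - (\<Union>j\<in>S. f j))) \<partial>Pi_pmf S {} (\<lambda>_. subset_pmf m D))
        \<le> ennreal (g ^ card (U - y))"
      unfolding g_def \<delta>_def using insert.prems by (intro insert.IH) auto
  qed
  also have "\<dots> \<le> ennreal ((g + (1 - g) * \<delta>) ^ card U)"
    unfolding \<delta>_def using insert.prems assms(4) g by (intro nn_integral_subset_pmf_power_card_diff_le) auto
  also have "g + (1 - g) * \<delta> = 1 - (1 - \<sigma>) * (1 - real D / real (m - D)) ^ card (insert x S)"
    using insert.hyps unfolding g_def \<delta>_def[symmetric] by (simp add: algebra_simps)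
  finally show ?case .
qed

lemma nn_integral_design_pmf_uncovered_le:
  fixes \<sigma> :: real
  assumes "i < n" "i \<notin> S" "S \<subseteq> {..<n}" "2 * D < m" "0 \<le> \<sigma>" "\<sigma> \<le> 1"
  shows "(\<integral>\<^sup>+ G. ennreal (\<sigma> ^ card (G i - (\<Union>j\<in>S. G j))) \<partial>design_pmf n m D)
          \<le> ennreal ((1 - (1 - \<sigma>) * (1 - real D / real (m - D)) ^ card S) ^ D)"
proof -
  define B where "B = {..<n} - {i}"
  let ?P = "\<lambda>_::nat. subset_pmf m D"
  have B: "finite B" "i \<notin> B" "S \<subseteq> B" "{..<n} = insert i B"
    using assms(1-3) unfolding B_def by auto
  have "(\<integral>\<^sup>+ G. ennreal (\<sigma> ^ card (G i - (\<Union>j\<in>S. G j))) \<partial>design_pmf n m D)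
      = (\<integral>\<^sup>+ y. \<integral>\<^sup>+ f. ennreal (\<sigma> ^ card (y - (\<Union>j\<in>S. f j))) \<partial>Pi_pmf B {} ?P \<partial>subset_pmf m D)"
  proof -
    have "(\<Union>j\<in>S. (f(i := y)) j) = (\<Union>j\<in>S. f j)" for f :: "nat \<Rightarrow> nat set" and y
      using assms(2) by auto
    then show ?thesis
      unfolding B(4) by (simp add: Pi_pmf_insert[OF B(1,2)] nn_integral_pair_pmf' case_prod_unfold
                                fun_upd_same del: fun_upd_apply)
  qed
  also have "\<dots> \<le> (\<integral>\<^sup>+ y. ennreal ((1 - (1 - \<sigma>) * (1 - real D / real (m - D)) ^ card S) ^ D) \<partial>subset_pmf m D)"
  proof (rule nn_integral_mono_AE, unfold AE_measure_pmf_iff, intro ballI)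
    fix y assume "y \<in> set_pmf (subset_pmf m D)"
    then have y: "y \<subseteq> {..<m}" "card y = D" using set_subset_pmf[of D m] assms(4) by auto
    have "(\<Union>j\<in>S. (if j \<in> S then f j else {})) = (\<Union>j\<in>S. f j)" for f :: "nat \<Rightarrow> nat set"
      by auto
    then have "(\<integral>\<^sup>+ f. ennreal (\<sigma> ^ card (y - (\<Union>j\<in>S. f j))) \<partial>Pi_pmf B {} ?P)
        = (\<integral>\<^sup>+ f. ennreal (\<sigma> ^ card (y - (\<Union>j\<in>S. f j))) \<partial>Pi_pmf S {} ?P)"
      by (simp add: Pi_pmf_subset[OF B(1,3)])
    also have "\<dots> \<le> ennreal ((1 - (1 - \<sigma>) * (1 - real D / real (m - D)) ^ card S) ^ card y)"
      using B(1,3) y assms(4-6)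
      by (intro nn_integral_Pi_subset_pmf_power_card_diff_le) (auto intro: finite_subset)
    finally show "(\<integral>\<^sup>+ f. ennreal (\<sigma> ^ card (y - (\<Union>j\<in>S. f j))) \<partial>Pi_pmf B {} ?P)
        \<le> ennreal ((1 - (1 - \<sigma>) * (1 - real D / real (m - D)) ^ card S) ^ D)"
      using y(2) by simp
  qed
  finally show ?thesis by simp
qed

section \<open>Exponential moments of the displayed negative tests\<close>

abbreviation neg_count :: "nat set \<Rightarrow> (nat \<Rightarrow> nat set) \<Rightarrow> (nat \<Rightarrow> bool) \<Rightarrow> nat \<Rightarrow> nat" where
  "neg_count S G F i \<equiv> card {a \<in> G i. displayed_neg S G F a}"

text \<open>\<open>chernoff_factor l \<alpha> p ^ D\<close> is \<open>exp (l \<alpha> D)\<close> times the moment generating function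
  \<open>E exp (- l X)\<close> of \<open>X \<sim> Bin (D, p)\<close>.\<close>

definition chernoff_factor :: "real \<Rightarrow> real \<Rightarrow> real \<Rightarrow> real" where
  "chernoff_factor l \<alpha> p = exp (l * \<alpha>) * (p * exp (- l) + 1 - p)"

lemma chernoff_factor_nonneg:
  assumes "0 \<le> p" "p \<le> 1"
  shows "0 \<le> chernoff_factor l \<alpha> p"
proof -
  have "0 \<le> p * exp (- l)" using assms(1) by simp
  then show ?thesis using assms(2) unfolding chernoff_factor_def by (intro mult_nonneg_nonneg) auto
qed

lemma chernoff_factor_antimono:
  assumes "0 \<le> l" "p \<le> p'"
  shows "chernoff_factor l \<alpha> p' \<le> chernoff_factor l \<alpha> p"
proof -
  have "p * (1 - exp (- l)) \<le> p' * (1 - exp (- l))"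
    using assms by (intro mult_right_mono) auto
  then have "p' * exp (- l) + 1 - p' \<le> p * exp (- l) + 1 - p"
    by (simp add: algebra_simps)
  then show ?thesis unfolding chernoff_factor_def by (intro mult_left_mono) auto
qed

lemma chernoff_factor_optimal:
  assumes "0 < \<alpha>" "\<alpha> < 1" "0 < p" "p < 1"
  shows "chernoff_factor (ln (p * (1 - \<alpha>) / (\<alpha> * (1 - p)))) \<alpha> p = exp (- DKL \<alpha> p)"
proof -
  define l where "l = ln (p * (1 - \<alpha>) / (\<alpha> * (1 - p)))"
  have l: "l = ln p + ln (1 - \<alpha>) - ln \<alpha> - ln (1 - p)"
    unfolding l_def using assms by (simp add: ln_div ln_mult)
  have "p * exp (- l) = \<alpha> * (1 - p) / (1 - \<alpha>)"
    unfolding l using assms by (simp add: exp_add exp_diff exp_minus field_simps)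
  then have "p * exp (- l) + 1 - p = exp (ln (1 - p) - ln (1 - \<alpha>))"
    using assms by (simp add: exp_diff field_simps)
  then have "chernoff_factor l \<alpha> p = exp (l * \<alpha> + ln (1 - p) - ln (1 - \<alpha>))"
    unfolding chernoff_factor_def by (simp add: exp_add exp_diff)
  also have "l * \<alpha> + ln (1 - p) - ln (1 - \<alpha>) = - DKL \<alpha> p"
    unfolding DKL_def l using assms by (simp add: ln_div algebra_simps)
  finally show ?thesis unfolding l_def .
qed

lemma nn_integral_Pi_bernoulli_prod:
  fixes \<phi> :: "'a \<Rightarrow> bool \<Rightarrow> real"
  assumes "finite A" "T \<subseteq> A" "\<And>a v. 0 \<le> \<phi> a v" "0 \<le> q" "q \<le> 1"
  shows "(\<integral>\<^sup>+ F. ennreal (\<Prod>a\<in>T. \<phi> a (F a)) \<partial>Pi_pmf A False (\<lambda>_. bernoulli_pmf q))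
         = ennreal (\<Prod>a\<in>T. q * \<phi> a True + (1 - q) * \<phi> a False)"
proof -
  have restrict: "(\<Prod>a\<in>T. f a) = (\<Prod>a\<in>A. if a \<in> T then f a else 1)" for f :: "'a \<Rightarrow> real"
    using assms(1,2) by (simp add: prod.If_cases Int_absorb1)
  have "(\<integral>\<^sup>+ F. ennreal (\<Prod>a\<in>T. \<phi> a (F a)) \<partial>Pi_pmf A False (\<lambda>_. bernoulli_pmf q))
      = (\<integral>\<^sup>+ F. (\<Prod>a\<in>A. ennreal (if a \<in> T then \<phi> a (F a) else 1)) \<partial>Pi_pmf A False (\<lambda>_. bernoulli_pmf q))"
    unfolding restrict using assms(3) by (subst prod_ennreal) auto
  also have "\<dots> = (\<Prod>a\<in>A. \<integral>\<^sup>+ v. ennreal (if a \<in> T then \<phi> a v else 1) \<partial>bernoulli_pmf q)"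
    by (rule nn_integral_prod_Pi_pmf[OF assms(1)])
  also have "\<dots> = (\<Prod>a\<in>A. ennreal (if a \<in> T then q * \<phi> a True + (1 - q) * \<phi> a False else 1))"
    using assms(3-5) by (intro prod.cong) (simp_all add: ennreal_mult' ennreal_plus[symmetric] mult.commute)
  also have "\<dots> = ennreal (\<Prod>a\<in>T. q * \<phi> a True + (1 - q) * \<phi> a False)"
    unfolding restrict using assms(3-5) by (subst prod_ennreal) auto
  finally show ?thesis .
qed

lemma exp_mult_card_filter:
  assumes "finite A"
  shows "exp (l * real (card {a \<in> A. P a})) = (\<Prod>a\<in>A. if P a then exp l else 1)"
  using prod.inter_filter[OF assms, of "\<lambda>_. exp l" P]
  by (simp add: exp_of_nat_mult[symmetric] mult.commute)

text \<open>A test of \<open>i\<close> containing no infected individual is displayed negative for sure, any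
  other one independently with probability \<open>q\<close>; hence the factor for the uncovered tests.\<close>

lemma nn_integral_flips_exp_neg_count:
  assumes "G i \<subseteq> {..<m}" "card (G i) = D" "0 \<le> q" "q \<le> 1"
  shows "(\<integral>\<^sup>+ F. ennreal (exp (l * (\<alpha> * real D - real (neg_count S G F i))))
            \<partial>flips_pmf m q)
       = ennreal (chernoff_factor l \<alpha> q ^ D
                  * (exp (- l) / (q * exp (- l) + 1 - q)) ^ card (G i - (\<Union>j\<in>S. G j)))"
proof -
  define e where "e = exp (- l)"
  define r where "r = q * e + 1 - q"
  define unc where "unc a \<longleftrightarrow> (\<forall>j\<in>S. a \<notin> G j)" for a
  have fin: "finite (G i)" using assms(1) finite_subset by blast
  have r: "0 < r"
  proof (cases "q = 1")
    case False
    then have "0 < 1 - q" using assms(4) by simp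
    moreover have "0 \<le> q * e" unfolding e_def using assms(3) by simp
    ultimately show ?thesis unfolding r_def by simp
  qed (simp add: r_def e_def)
  have "exp (l * (\<alpha> * real D - real (neg_count S G F i)))
      = exp (l * \<alpha>) ^ D * (\<Prod>a\<in>G i. if unc a \<or> F a then e else 1)" for F
  proof -
    have "exp (- l * real (neg_count S G F i)) = (\<Prod>a\<in>G i. if unc a \<or> F a then e else 1)"
      unfolding e_def unc_def displayed_neg_def by (rule exp_mult_card_filter[OF fin])
    then show ?thesis
      by (simp add: exp_diff exp_of_nat_mult[symmetric] exp_minus field_simps)
  qed
  then have "(\<integral>\<^sup>+ F. ennreal (exp (l * (\<alpha> * real D - real (neg_count S G F i))))
            \<partial>flips_pmf m q)
      = ennreal (exp (l * \<alpha>) ^ D) * (\<integral>\<^sup>+ F. ennreal (\<Prod>a\<in>G i. if unc a \<or> F a then e else 1) \<partial>flips_pmf m q)"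
    unfolding e_def by (simp add: ennreal_mult' nn_integral_cmult prod_nonneg)
  also have "(\<integral>\<^sup>+ F. ennreal (\<Prod>a\<in>G i. if unc a \<or> F a then e else 1) \<partial>flips_pmf m q)
      = ennreal (\<Prod>a\<in>G i. if unc a then e else r)"
    using nn_integral_Pi_bernoulli_prod[of "{..<m}" "G i" "\<lambda>a v. if unc a \<or> v then e else 1" q] assms
    unfolding e_def r_def by (simp add: if_distrib algebra_simps cong: if_cong)
  also have "(\<Prod>a\<in>G i. if unc a then e else r) = r ^ D * (e / r) ^ card (G i - (\<Union>j\<in>S. G j))"
  proof -
    have "(\<Prod>a\<in>G i. if unc a then e else r) = (\<Prod>a\<in>G i. r * (if unc a then e / r else 1))"
      using r by (intro prod.cong) auto
    also have "\<dots> = r ^ D * (\<Prod>a\<in>{a \<in> G i. unc a}. e / r)"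
      using assms(2) prod.inter_filter[OF fin, of "\<lambda>_. e / r" unc] by (simp add: prod.distrib)
    also have "{a \<in> G i. unc a} = G i - (\<Union>j\<in>S. G j)" unfolding unc_def by auto
    finally show ?thesis by simp
  qed
  also have "ennreal (exp (l * \<alpha>) ^ D) * ennreal (r ^ D * (e / r) ^ card (G i - (\<Union>j\<in>S. G j)))
      = ennreal (chernoff_factor l \<alpha> q ^ D * (e / r) ^ card (G i - (\<Union>j\<in>S. G j)))"
    using r unfolding chernoff_factor_def e_def r_def
    by (simp add: ennreal_mult'[symmetric] power_mult_distrib mult.assoc)
  finally show ?thesis unfolding e_def r_def .
qed

lemma emeasure_pmf_le_nn_integral_exp:
  assumes "\<And>x. x \<in> E \<Longrightarrow> 0 \<le> g x"
  shows "emeasure (measure_pmf M) E \<le> (\<integral>\<^sup>+ x. ennreal (exp (g x)) \<partial>M)"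
proof -
  have "emeasure (measure_pmf M) E = (\<integral>\<^sup>+ x. indicator E x \<partial>M)" by simp
  also have "\<dots> \<le> (\<integral>\<^sup>+ x. ennreal (exp (g x)) \<partial>M)"
    using assms by (intro nn_integral_mono) (auto simp: indicator_def)
  finally show ?thesis .
qed

lemma nn_integral_design_flips_exp_neg_count:
  assumes "i < n" "D \<le> m" "0 \<le> q" "q \<le> 1"
  shows "(\<integral>\<^sup>+ z. ennreal (exp (case z of (G, F) \<Rightarrow>
             l * (\<alpha> * real D - real (neg_count S G F i))))
           \<partial>pair_pmf (design_pmf n m D) (flips_pmf m q))
       = ennreal (chernoff_factor l \<alpha> q ^ D)
         * (\<integral>\<^sup>+ G. ennreal ((exp (- l) / (q * exp (- l) + 1 - q)) ^ card (G i - (\<Union>j\<in>S. G j)))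
              \<partial>design_pmf n m D)"
proof -
  have "(\<integral>\<^sup>+ z. ennreal (exp (case z of (G, F) \<Rightarrow>
             l * (\<alpha> * real D - real (neg_count S G F i))))
           \<partial>pair_pmf (design_pmf n m D) (flips_pmf m q))
      = (\<integral>\<^sup>+ G. ennreal (chernoff_factor l \<alpha> q ^ D
            * (exp (- l) / (q * exp (- l) + 1 - q)) ^ card (G i - (\<Union>j\<in>S. G j))) \<partial>design_pmf n m D)"
    unfolding nn_integral_pair_pmf' using set_pmf_design_pmf[OF _ assms(1,2)] assms(3,4)
    by (intro nn_integral_cong_AE) (simp add: AE_measure_pmf_iff nn_integral_flips_exp_neg_count)
  also have "\<dots> = ennreal (chernoff_factor l \<alpha> q ^ D)
      * (\<integral>\<^sup>+ G. ennreal ((exp (- l) / (q * exp (- l) + 1 - q)) ^ card (G i - (\<Union>j\<in>S. G j)))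
           \<partial>design_pmf n m D)"
    using chernoff_factor_nonneg[OF assms(3,4)]
    by (simp add: ennreal_mult' nn_integral_cmult)
  finally show ?thesis .
qed

section \<open>The failure probability of noisy COMP\<close>

lemma prob_infected_declared_healthy_le:
  assumes "i \<in> S" "i < n" "D \<le> m" "0 \<le> q" "q \<le> 1" "l \<le> 0"
  shows "emeasure (pair_pmf (design_pmf n m D) (flips_pmf m q))
           {(G, F). \<alpha> * real D \<le> real (neg_count S G F i)}
         \<le> ennreal (chernoff_factor l \<alpha> q ^ D)"
proof -
  have "emeasure (pair_pmf (design_pmf n m D) (flips_pmf m q))
           {(G, F). \<alpha> * real D \<le> real (neg_count S G F i)}
      \<le> (\<integral>\<^sup>+ z. ennreal (exp (case z of (G, F) \<Rightarrow>
             l * (\<alpha> * real D - real (neg_count S G F i))))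
           \<partial>pair_pmf (design_pmf n m D) (flips_pmf m q))"
    using assms(6) by (intro emeasure_pmf_le_nn_integral_exp) (auto intro: mult_nonpos_nonpos)
  also have "\<dots> = ennreal (chernoff_factor l \<alpha> q ^ D)"
  proof -
    have "G i - (\<Union>j\<in>S. G j) = {}" for G :: "nat \<Rightarrow> nat set" using assms(1) by auto
    then have "(\<integral>\<^sup>+ G. ennreal (x ^ card (G i - (\<Union>j\<in>S. G j))) \<partial>design_pmf n m D) = 1" for x
      by (simp only: card.empty power_0 ennreal_1) simp
    then show ?thesis using assms(2-5) by (simp add: nn_integral_design_flips_exp_neg_count)
  qed
  finally show ?thesis .
qed

lemma prob_healthy_declared_infected_le:
  assumes "i \<notin> S" "i < n" "S \<subseteq> {..<n}" "2 * D < m" "0 \<le> q" "q \<le> 1" "0 \<le> l"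
  defines "\<pi> \<equiv> (1 - real D / real (m - D)) ^ card S"
  shows "emeasure (pair_pmf (design_pmf n m D) (flips_pmf m q))
           {(G, F). real (neg_count S G F i) < \<alpha> * real D}
         \<le> ennreal (chernoff_factor l \<alpha> (\<pi> + (1 - \<pi>) * q) ^ D)"
proof -
  define e where "e = exp (- l)"
  define r where "r = q * e + 1 - q"
  have e: "0 < e" "e \<le> 1" unfolding e_def using assms(7) by auto
  have r: "e \<le> r"
  proof -
    have "0 \<le> (1 - q) * (1 - e)" using e assms(6) by simp
    then show ?thesis unfolding r_def by (simp add: algebra_simps)
  qed
  have "emeasure (pair_pmf (design_pmf n m D) (flips_pmf m q))
           {(G, F). real (neg_count S G F i) < \<alpha> * real D}
      \<le> (\<integral>\<^sup>+ z. ennreal (exp (case z of (G, F) \<Rightarrow>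
             l * (\<alpha> * real D - real (neg_count S G F i))))
           \<partial>pair_pmf (design_pmf n m D) (flips_pmf m q))"
    using assms(7) by (intro emeasure_pmf_le_nn_integral_exp) auto
  also have "\<dots> = ennreal (chernoff_factor l \<alpha> q ^ D)
      * (\<integral>\<^sup>+ G. ennreal ((e / r) ^ card (G i - (\<Union>j\<in>S. G j))) \<partial>design_pmf n m D)"
    unfolding e_def r_def using assms(2,4-6) by (intro nn_integral_design_flips_exp_neg_count) auto
  also have "\<dots> \<le> ennreal (chernoff_factor l \<alpha> q ^ D) * ennreal ((1 - (1 - e / r) * \<pi>) ^ D)"
    unfolding \<pi>_def using assms(1-4) e r
    by (intro mult_left_mono nn_integral_design_pmf_uncovered_le) (auto simp: divide_le_eq)
  also have "\<dots> = ennreal ((chernoff_factor l \<alpha> q * (1 - (1 - e / r) * \<pi>)) ^ D)"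
    using chernoff_factor_nonneg[OF assms(5,6)] by (simp add: ennreal_mult' power_mult_distrib)
  also have "chernoff_factor l \<alpha> q * (1 - (1 - e / r) * \<pi>) = chernoff_factor l \<alpha> (\<pi> + (1 - \<pi>) * q)"
    using e r unfolding chernoff_factor_def e_def[symmetric] r_def[symmetric]
    by (simp add: r_def field_simps)
  finally show ?thesis .
qed

lemma power_one_minus_ratio_bounds:
  assumes "2 * D < m"
  shows "0 \<le> (1 - real D / real (m - D)) ^ k" "(1 - real D / real (m - D)) ^ k \<le> 1"
  using assms by (auto simp: divide_le_eq intro!: power_le_one)

lemma chernoff_factor_mix_nonneg:
  assumes "0 \<le> \<pi>" "\<pi> \<le> 1" "0 \<le> q" "q \<le> 1"
  shows "0 \<le> chernoff_factor l \<alpha> (\<pi> + (1 - \<pi>) * q)"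
  using assms mult_left_le[of q "1 - \<pi>"] by (intro chernoff_factor_nonneg) auto

lemma noisy_COMP_wrong_cases:
  assumes "noisy_COMP n D \<alpha> S G F \<noteq> S" "S \<subseteq> {..<n}"
  obtains i where "i < n" "i \<in> S" "\<alpha> * real D \<le> real (neg_count S G F i)"
    | i where "i < n" "i \<notin> S" "real (neg_count S G F i) < \<alpha> * real D"
proof -
  obtain i where "i < n" "i \<in> S \<longleftrightarrow> i \<notin> noisy_COMP n D \<alpha> S G F"
    using assms unfolding noisy_COMP_def by blast
  then show thesis using that unfolding noisy_COMP_def by (cases "i \<in> S") auto
qed

lemma emeasure_pair_pmf_le:
  assumes "\<And>x. x \<in> set_pmf A \<Longrightarrow> emeasure (measure_pmf B) {y. (x, y) \<in> E} \<le> b"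
  shows "emeasure (measure_pmf (pair_pmf A B)) E \<le> b"
proof -
  have "emeasure (measure_pmf (pair_pmf A B)) E = (\<integral>\<^sup>+ x. \<integral>\<^sup>+ y. indicator E (x, y) \<partial>B \<partial>A)"
    by (simp add: nn_integral_pair_pmf'[symmetric])
  also have "\<dots> = (\<integral>\<^sup>+ x. emeasure (measure_pmf B) {y. (x, y) \<in> E} \<partial>A)"
    by (intro nn_integral_cong) (simp add: indicator_def[abs_def] split_def nn_integral_indicator[symmetric])
  also have "\<dots> \<le> (\<integral>\<^sup>+ x. b \<partial>A)"
    using assms by (intro nn_integral_mono_AE) (simp add: AE_measure_pmf_iff)
  finally show ?thesis by (simp add: measure_pmf.emeasure_space_1)
qed

lemma sum_lessThan_if_le:
  fixes a b :: real
  assumes "S \<subseteq> {..<n}" "0 \<le> b"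
  shows "(\<Sum>i<n. if i \<in> S then a else b) \<le> real (card S) * a + real n * b"
proof -
  have "(\<Sum>i<n. if i \<in> S then a else b) = real (card S) * a + real (card ({..<n} - S)) * b"
    using assms(1) by (simp add: sum.If_cases Int_absorb1 Diff_eq)
  moreover have "card ({..<n} - S) \<le> n" using card_mono[of "{..<n}" "{..<n} - S"] by auto
  ultimately show ?thesis using assms(2) by (simp add: mult_right_mono)
qed

lemma prob_noisy_COMP_wrong_le:
  assumes "S \<subseteq> {..<n}" "card S = k" "2 * D < m" "0 \<le> q" "q \<le> 1" "l1 \<le> 0" "0 \<le> l2"
  defines "\<pi> \<equiv> (1 - real D / real (m - D)) ^ k"
  shows "emeasure (pair_pmf (design_pmf n m D) (flips_pmf m q)) {(G, F). noisy_COMP n D \<alpha> S G F \<noteq> S}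
         \<le> ennreal (real k * chernoff_factor l1 \<alpha> q ^ D
                    + real n * chernoff_factor l2 \<alpha> (\<pi> + (1 - \<pi>) * q) ^ D)"
proof -
  let ?P = "pair_pmf (design_pmf n m D) (flips_pmf m q)"
  define B where "B i = (if i \<in> S then chernoff_factor l1 \<alpha> q ^ D
                         else chernoff_factor l2 \<alpha> (\<pi> + (1 - \<pi>) * q) ^ D)" for i
  define E where "E i = (if i \<in> S
      then {(G, F). \<alpha> * real D \<le> real (neg_count S G F i)}
      else {(G, F). real (neg_count S G F i) < \<alpha> * real D})" for i
  have B1: "0 \<le> chernoff_factor l1 \<alpha> q ^ D" and B2: "0 \<le> chernoff_factor l2 \<alpha> (\<pi> + (1 - \<pi>) * q) ^ D"
    unfolding \<pi>_def using power_one_minus_ratio_bounds[OF assms(3)] assms(4,5)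
    by (simp_all add: chernoff_factor_nonneg chernoff_factor_mix_nonneg)
  then have B: "0 \<le> B i" for i unfolding B_def by simp
  have "emeasure ?P {(G, F). noisy_COMP n D \<alpha> S G F \<noteq> S} \<le> emeasure ?P (\<Union>i<n. E i)"
    by (intro emeasure_mono) (auto simp: E_def elim!: noisy_COMP_wrong_cases[OF _ assms(1)])
  also have "\<dots> \<le> (\<Sum>i<n. emeasure ?P (E i))"
    by (rule emeasure_subadditive_finite) auto
  also have "\<dots> \<le> (\<Sum>i<n. ennreal (B i))"
  proof (intro sum_mono)
    fix i assume i: "i \<in> {..<n}"
    show "emeasure ?P (E i) \<le> ennreal (B i)"
    proof (cases "i \<in> S")
      case True
      then show ?thesis
        unfolding E_def B_def using i assms(3-6) prob_infected_declared_healthy_le[of i S n D m q l1 \<alpha>]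
        by simp
    next
      case False
      then show ?thesis
        unfolding E_def B_def \<pi>_def
        using i assms(1,3-5,7) prob_healthy_declared_infected_le[of i S n D m q l2 \<alpha>, unfolded assms(2)]
        by simp
    qed
  qed
  also have "\<dots> = ennreal (\<Sum>i<n. B i)" using B by (simp add: sum_ennreal)
  also have "(\<Sum>i<n. B i) \<le> real k * chernoff_factor l1 \<alpha> q ^ D
      + real n * chernoff_factor l2 \<alpha> (\<pi> + (1 - \<pi>) * q) ^ D"
    unfolding B_def using sum_lessThan_if_le[OF assms(1) B2] assms(2) by simp
  finally show ?thesis by (simp add: ennreal_leI)
qed

lemma one_minus_success_prob_le:
  assumes "k \<le> n" "2 * D < m" "0 \<le> q" "q \<le> 1" "l1 \<le> 0" "0 \<le> l2"
  defines "\<pi> \<equiv> (1 - real D / real (m - D)) ^ k"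
  shows "1 - success_prob n k m D q \<alpha> \<le> real k * chernoff_factor l1 \<alpha> q ^ D
                                        + real n * chernoff_factor l2 \<alpha> (\<pi> + (1 - \<pi>) * q) ^ D"
proof -
  let ?Fail = "{(S, G, F). noisy_COMP n D \<alpha> S G F \<noteq> S}"
  let ?b = "real k * chernoff_factor l1 \<alpha> q ^ D + real n * chernoff_factor l2 \<alpha> (\<pi> + (1 - \<pi>) * q) ^ D"
  have "{..<k} \<in> {S. S \<subseteq> {..<n} \<and> card S = k}" using assms(1) by auto
  moreover have "finite {S. S \<subseteq> {..<n} \<and> card S = k}"
    by (rule finite_subset[of _ "Pow {..<n}"]) auto
  ultimately have subsets: "set_pmf (pmf_of_set {S. S \<subseteq> {..<n} \<and> card S = k})
      = {S. S \<subseteq> {..<n} \<and> card S = k}"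
    by (intro set_pmf_of_set) blast+
  have "emeasure (measure_pmf (gt_space n k m D q)) ?Fail \<le> ennreal ?b"
    unfolding gt_space_def
  proof (rule emeasure_pair_pmf_le)
    fix S assume "S \<in> set_pmf (pmf_of_set {S. S \<subseteq> {..<n} \<and> card S = k})"
    then have S: "S \<subseteq> {..<n}" "card S = k" unfolding subsets by auto
    have "{y. (S, y) \<in> ?Fail} = {(G, F). noisy_COMP n D \<alpha> S G F \<noteq> S}" by auto
    then show "emeasure (pair_pmf (design_pmf n m D) (flips_pmf m q)) {y. (S, y) \<in> ?Fail} \<le> ennreal ?b"
      unfolding \<pi>_def using prob_noisy_COMP_wrong_le[OF S assms(2-6), of \<alpha>] by simp
  qed
  moreover have "measure_pmf.prob (gt_space n k m D q) ?Fail = 1 - success_prob n k m D q \<alpha>"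
    unfolding success_prob_def
    by (subst measure_pmf.prob_compl[symmetric]) (auto intro: arg_cong[where f = "measure_pmf.prob _"])
  moreover have "0 \<le> ?b"
    unfolding \<pi>_def using power_one_minus_ratio_bounds[OF assms(2)] assms(3,4)
    by (simp add: chernoff_factor_nonneg chernoff_factor_mix_nonneg)
  ultimately show ?thesis
    by (simp add: measure_pmf.emeasure_eq_measure)
qed

section \<open>Choice of the parameters\<close>

lemma DKL_pos:
  assumes "0 < r" "r < 1" "0 < s" "s < 1" "r \<noteq> s"
  shows "0 < DKL r s"
proof -
  have ln_less: "ln x < x - 1" if "0 < x" "x \<noteq> 1" for x :: real
    using that ln_le_minus_one[of x] ln_eq_minus_one[of x] by fastforce
  have "r * ln (s / r) < r * (s / r - 1)"
    using assms by (intro mult_strict_left_mono ln_less) auto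
  moreover have "(1 - r) * ln ((1 - s) / (1 - r)) \<le> (1 - r) * ((1 - s) / (1 - r) - 1)"
    using assms by (intro mult_left_mono ln_le_minus_one) auto
  moreover have "r * (s / r - 1) + (1 - r) * ((1 - s) / (1 - r) - 1) = 0"
    using assms by (simp add: field_simps)
  ultimately have "r * ln (s / r) + (1 - r) * ln ((1 - s) / (1 - r)) < 0" by linarith
  then show ?thesis unfolding DKL_def using assms by (simp add: ln_div algebra_simps)
qed

lemma admissible_bounds:
  assumes "admissible q \<alpha> d" "0 < q" "q < 1"
  defines "s \<equiv> exp (- d) + (1 - exp (- d)) * q"
  shows "0 < d" "q < \<alpha>" "\<alpha> < s" "0 < \<alpha>" "\<alpha> < 1" "0 < s" "s < 1"
    "0 < DKL \<alpha> q" "0 < DKL \<alpha> s"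
proof -
  show d: "0 < d" "q < \<alpha>" "\<alpha> < s" using assms unfolding admissible_def s_def by auto
  have "1 - s = (1 - exp (- d)) * (1 - q)" unfolding s_def by (simp add: algebra_simps)
  moreover have "0 < (1 - exp (- d)) * (1 - q)" using d(1) assms(3) by simp
  ultimately show s: "s < 1" by simp
  show "0 < s" using d assms(2) by simp
  show a: "0 < \<alpha>" "\<alpha> < 1" using d s assms(2) by auto
  show "0 < DKL \<alpha> q" "0 < DKL \<alpha> s" using a d s assms(2,3) by (auto intro!: DKL_pos)
qed

lemma ex_admissible:
  assumes "q < 1" "0 < d"
  shows "\<exists>\<alpha>. admissible q \<alpha> d"
proof
  have "q < exp (- d) + (1 - exp (- d)) * q"
    using assms mult_strict_left_mono[of q 1 "exp (- d)"] by (simp add: algebra_simps)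
  then show "admissible q ((q + (exp (- d) + (1 - exp (- d)) * q)) / 2) d"
    using assms(2) unfolding admissible_def by (simp add: mult.commute)
qed

lemma b1_less_iff:
  assumes "admissible q \<alpha> d" "0 < q" "q < 1" "\<theta> < 1"
  shows "b1 \<theta> q \<alpha> d < c \<longleftrightarrow> \<theta> < (1 - \<theta>) * (c * d * DKL \<alpha> q)"
proof -
  have "0 < (1 - \<theta>) * (d * DKL \<alpha> q)"
    using admissible_bounds[OF assms(1-3)] assms(4) by simp
  then show ?thesis unfolding b1_def by (simp add: divide_less_eq algebra_simps)
qed

lemma b2_less_iff:
  assumes "admissible q \<alpha> d" "0 < q" "q < 1" "\<theta> < 1"
  shows "b2 \<theta> q \<alpha> d < c
     \<longleftrightarrow> 1 < (1 - \<theta>) * (c * d * DKL \<alpha> (exp (- d) + (1 - exp (- d)) * q))"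
proof -
  have "0 < (1 - \<theta>) * (d * DKL \<alpha> (exp (- d) + (1 - exp (- d)) * q))"
    using admissible_bounds[OF assms(1-3)] assms(4) by simp
  then show ?thesis unfolding b2_def by (simp add: divide_less_eq algebra_simps)
qed

lemma b1_pos:
  assumes "admissible q \<alpha> d" "0 < q" "q < 1" "0 < \<theta>" "\<theta> < 1"
  shows "0 < b1 \<theta> q \<alpha> d"
  using admissible_bounds[OF assms(1-3)] assms(4,5) unfolding b1_def by simp

lemma b2_less_imp_exponent:
  assumes "admissible q \<alpha> d" "0 < q" "q < 1" "\<theta> < 1" "b2 \<theta> q \<alpha> d < c"
  obtains E where "0 < E" "E < DKL \<alpha> (exp (- d) + (1 - exp (- d)) * q)" "1 < (1 - \<theta>) * (c * d * E)"
proof -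
  define K where "K = (1 - \<theta>) * c * d"
  define X where "X = DKL \<alpha> (exp (- d) + (1 - exp (- d)) * q)"
  have "1 < K * X"
    using assms(5) b2_less_iff[OF assms(1-4)] unfolding K_def X_def by (simp add: mult.assoc)
  moreover have "0 < X" using admissible_bounds[OF assms(1-3)] unfolding X_def by simp
  ultimately have K: "0 < K" using zero_less_mult_pos2[of K X] by simp
  then have "1 / K < X" using \<open>1 < K * X\<close> by (simp add: divide_less_eq mult.commute)
  define E where "E = (X + 1 / K) / 2"
  have "0 < E" "E < X" "1 < K * E"
    using K \<open>1 / K < X\<close> unfolding E_def by (auto simp: field_simps)
  moreover have "K * E = (1 - \<theta>) * (c * d * E)" unfolding K_def by (simp add: mult.assoc)
  ultimately show thesis using that[of E] unfolding X_def by simp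
qed

lemma exists_admissible_b1_b2_less:
  assumes "0 < q" "q < 1" "0 < \<theta>" "\<theta> < 1" "0 < \<epsilon>" "(1 + \<epsilon>) * mCOMP_coeff \<theta> q < c"
  obtains \<alpha> d where "admissible q \<alpha> d" "b1 \<theta> q \<alpha> d < c" "b2 \<theta> q \<alpha> d < c"
proof -
  define X where "X = {max (b1 \<theta> q \<alpha> d) (b2 \<theta> q \<alpha> d) | \<alpha> d. admissible q \<alpha> d}"
  have "X \<noteq> {}" unfolding X_def using ex_admissible[OF assms(2) zero_less_one] by blast
  moreover have "0 \<le> x" if x: "x \<in> X" for x
  proof -
    obtain \<alpha> d where "admissible q \<alpha> d" "x = max (b1 \<theta> q \<alpha> d) (b2 \<theta> q \<alpha> d)"
      using x unfolding X_def by blast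
    then show ?thesis using b1_pos[of q _ _ \<theta>] assms(1-4) by fastforce
  qed
  ultimately have "0 \<le> Inf X" by (rule cInf_greatest)
  moreover have "0 \<le> \<epsilon> * Inf X" using calculation assms(5) by simp
  ultimately have "Inf X \<le> (1 + \<epsilon>) * Inf X" by (simp add: distrib_right)
  also have "\<dots> < c" using assms(6) unfolding mCOMP_coeff_def X_def .
  finally have "Inf X < c" .
  then obtain x where "x \<in> X" "x < c" using cInf_lessD[OF \<open>X \<noteq> {}\<close>] by blast
  then show thesis using that unfolding X_def by auto
qed

lemma infected_chernoff_exponent:
  assumes "admissible q \<alpha> d" "0 < q" "q < 1"
  obtains l where "l \<le> 0" "chernoff_factor l \<alpha> q = exp (- DKL \<alpha> q)"
proof
  note adm = admissible_bounds[OF assms]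
  have "q * (1 - \<alpha>) \<le> \<alpha> * (1 - q)" using adm by (simp add: algebra_simps)
  then have "q * (1 - \<alpha>) / (\<alpha> * (1 - q)) \<le> 1" using adm assms(3) by (simp add: divide_le_eq)
  moreover have "0 < q * (1 - \<alpha>) / (\<alpha> * (1 - q))" using adm assms(2,3) by simp
  ultimately show "ln (q * (1 - \<alpha>) / (\<alpha> * (1 - q))) \<le> 0" by simp
  show "chernoff_factor (ln (q * (1 - \<alpha>) / (\<alpha> * (1 - q)))) \<alpha> q = exp (- DKL \<alpha> q)"
    using adm assms(2,3) by (intro chernoff_factor_optimal) auto
qed

text \<open>The healthy exponent is needed for every \<open>\<pi>\<close> slightly below \<open>exp (- d)\<close>, because
  the probability that a test contains no infected individual only tends to \<open>exp (- d)\<close>;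
  continuity in \<open>d\<close> pays for this with an arbitrarily small loss in the exponent.\<close>

lemma healthy_chernoff_exponent:
  assumes "admissible q \<alpha> d" "0 < q" "q < 1" "E < DKL \<alpha> (exp (- d) + (1 - exp (- d)) * q)"
  obtains l d' where "0 \<le> l" "d < d'"
    "\<And>\<pi>. exp (- d') \<le> \<pi> \<Longrightarrow> chernoff_factor l \<alpha> (\<pi> + (1 - \<pi>) * q) \<le> exp (- E)"
proof -
  define s where "s t = exp (- t) + (1 - exp (- t)) * q" for t
  note adm = admissible_bounds[OF assms(1-3), folded s_def]
  define l where "l = ln (s d * (1 - \<alpha>) / (\<alpha> * (1 - s d)))"
  have "\<alpha> * (1 - s d) \<le> s d * (1 - \<alpha>)" using adm by (simp add: algebra_simps)
  then have l: "0 \<le> l" unfolding l_def using adm by (simp add: le_divide_eq)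
  have "chernoff_factor l \<alpha> (s d) < exp (- E)"
    using chernoff_factor_optimal[of \<alpha> "s d"] adm assms(4) unfolding l_def s_def by simp
  moreover have "isCont (\<lambda>t. chernoff_factor l \<alpha> (s t)) d"
    unfolding chernoff_factor_def s_def by (intro continuous_intros)
  ultimately have "eventually (\<lambda>t. chernoff_factor l \<alpha> (s t) < exp (- E)) (at d)"
    unfolding isCont_def by (intro order_tendstoD(2))
  then have "eventually (\<lambda>t. chernoff_factor l \<alpha> (s t) < exp (- E)) (at_right d)"
    by (simp add: eventually_at_split)
  then obtain b where "d < b" and b: "\<And>t. d < t \<Longrightarrow> t < b \<Longrightarrow> chernoff_factor l \<alpha> (s t) < exp (- E)"
    by (auto simp: eventually_at_right_field)
  define d' where "d' = (d + b) / 2"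
  have d': "d < d'" "chernoff_factor l \<alpha> (s d') < exp (- E)"
    using b \<open>d < b\<close> unfolding d'_def by auto
  show thesis
  proof (rule that[OF l d'(1)])
    fix \<pi> assume "exp (- d') \<le> \<pi>"
    then have "s d' \<le> \<pi> + (1 - \<pi>) * q"
      unfolding s_def using assms(3) mult_right_mono[of "exp (- d')" \<pi> "1 - q"]
      by (simp add: algebra_simps)
    then show "chernoff_factor l \<alpha> (\<pi> + (1 - \<pi>) * q) \<le> exp (- E)"
      using chernoff_factor_antimono[OF l] d'(2) by (meson less_imp_le order_trans)
  qed
qed

section \<open>Asymptotics\<close>

lemma eventually_bounds_of_asymp_equiv_powr:
  assumes "(\<lambda>n. real (k n)) \<sim>[at_top] (\<lambda>n. real n powr \<theta>)"
  shows "eventually (\<lambda>n. real n powr \<theta> / 2 \<le> real (k n) \<and> real (k n) \<le> 2 * real n powr \<theta>) at_top"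
proof -
  have "eventually (\<lambda>n::nat. real (k n) \<noteq> 0 \<or> real n powr \<theta> \<noteq> 0) at_top"
    using eventually_ge_at_top[of 1] by eventually_elim auto
  then have lim: "((\<lambda>n. real (k n) / real n powr \<theta>) \<longlongrightarrow> 1) at_top"
    by (rule asymp_equivD_strong[OF assms])
  have "eventually (\<lambda>n. 1 / 2 < real (k n) / real n powr \<theta>) at_top"
    by (rule order_tendstoD(1)[OF lim]) simp
  moreover have "eventually (\<lambda>n. real (k n) / real n powr \<theta> < 2) at_top"
    by (rule order_tendstoD(2)[OF lim]) simp
  ultimately show ?thesis using eventually_ge_at_top[of 1]
  proof eventually_elim
    case (elim n)
    then have "0 < real n powr \<theta>" by simp
    then show ?case using elim(1,2) by (simp add: field_simps)
  qed
qed

lemma filterlim_at_top_of_asymp_equiv_powr: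
  assumes "(\<lambda>n. real (k n)) \<sim>[at_top] (\<lambda>n. real n powr \<theta>)" "0 < \<theta>"
  shows "filterlim (\<lambda>n. real (k n)) at_top at_top"
proof (rule asymp_equiv_at_top_transfer[OF asymp_equiv_symI[OF assms(1)]])
  show "filterlim (\<lambda>n::nat. real n powr \<theta>) at_top at_top" using assms(2) by real_asymp
qed

lemma filterlim_ln_ratio_at_top:
  assumes "(\<lambda>n. real (k n)) \<sim>[at_top] (\<lambda>n. real n powr \<theta>)" "\<theta> < 1"
  shows "filterlim (\<lambda>n. ln (real n / real (k n))) at_top at_top"
proof -
  have "(\<lambda>n. real n / real n powr \<theta>) \<sim>[at_top] (\<lambda>n. real n / real (k n))"
    by (intro asymp_equiv_intros asymp_equiv_symI[OF assms(1)])
  moreover have "filterlim (\<lambda>n::nat. real n / real n powr \<theta>) at_top at_top"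
    using assms(2) by real_asymp
  ultimately have "filterlim (\<lambda>n. real n / real (k n)) at_top at_top"
    by (rule asymp_equiv_at_top_transfer)
  then show ?thesis by (rule filterlim_compose[OF ln_at_top])
qed

lemma tendsto_zero_mult_exp_neg_ln_ratio:
  fixes g :: "nat \<Rightarrow> real"
  assumes k: "(\<lambda>n. real (k n)) \<sim>[at_top] (\<lambda>n. real n powr \<theta>)"
    and "0 \<le> a" "e < (1 - \<theta>) * a"
    and g: "eventually (\<lambda>n. 0 \<le> g n \<and> g n \<le> C * real n powr e) at_top"
  shows "((\<lambda>n. g n * exp (- a * ln (real n / real (k n)))) \<longlongrightarrow> 0) at_top"
proof -
  have lower: "eventually (\<lambda>n. 0 \<le> g n * exp (- a * ln (real n / real (k n)))) at_top"
    using g by eventually_elim simp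
  have upper: "eventually (\<lambda>n. g n * exp (- a * ln (real n / real (k n)))
      \<le> C * 2 powr a * real n powr (e - (1 - \<theta>) * a)) at_top"
    using g eventually_bounds_of_asymp_equiv_powr[OF k] eventually_ge_at_top[of 1]
  proof eventually_elim
    case (elim n)
    have n: "0 < real n" using elim(3) by simp
    have "0 < real n powr \<theta>" using n by simp
    then have kn: "0 < real (k n)" using elim(2) by linarith
    have "exp (- a * ln (real n / real (k n))) = (real (k n) / real n) powr a"
      using n kn by (simp add: powr_def ln_div algebra_simps)
    also have "\<dots> \<le> (2 * real n powr (\<theta> - 1)) powr a"
      using elim(2) n kn assms(2) by (intro powr_mono2) (auto simp: powr_diff field_simps)
    also have "\<dots> = 2 powr a * real n powr ((\<theta> - 1) * a)"
      using n by (simp add: powr_mult powr_powr)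
    finally have "g n * exp (- a * ln (real n / real (k n)))
        \<le> C * real n powr e * (2 powr a * real n powr ((\<theta> - 1) * a))"
      using elim(1) by (intro mult_mono) auto
    also have "\<dots> = C * 2 powr a * real n powr (e - (1 - \<theta>) * a)"
      using n by (simp add: powr_add[symmetric] algebra_simps)
    finally show ?case .
  qed
  have "((\<lambda>n. C * 2 powr a * real n powr (e - (1 - \<theta>) * a)) \<longlongrightarrow> 0) at_top"
    using assms(3) by (intro tendsto_mult_right_zero tendsto_neg_powr filterlim_real_sequentially) simp
  then show ?thesis using tendsto_sandwich[OF lower upper tendsto_const] by blast
qed

section \<open>The regime of the test design\<close>

lemma exp_neg_le_power_one_minus_ratio:
  assumes "2 * D < m"
  shows "exp (- (real k * real D / (real m - 2 * real D))) \<le> (1 - real D / real (m - D)) ^ k"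
proof -
  define x where "x = (real m - real D) / (real m - 2 * real D)"
  have pos: "0 < real m - 2 * real D" using assms by linarith
  then have x: "0 < x" unfolding x_def by simp
  have "1 - real D / real (m - D) = 1 / x"
    unfolding x_def using assms pos by (simp add: of_nat_diff field_simps)
  moreover have "ln x \<le> real D / (real m - 2 * real D)"
    using ln_le_minus_one[OF x] pos unfolding x_def by (simp add: field_simps)
  then have "real k * ln x \<le> real k * (real D / (real m - 2 * real D))"
    by (rule mult_left_mono) simp
  then have "- (real k * real D / (real m - 2 * real D)) \<le> real k * ln (1 / x)"
    using x by (simp add: ln_div)
  ultimately show ?thesis
    using x by (metis exp_le_cancel_iff exp_ln exp_of_nat_mult order.trans order_refl zero_less_divide_1_iff)
qed

lemma ceiling_design_ratio_le:
  fixes c d k L :: real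
  defines "u \<equiv> c * d + inverse L" and "w \<equiv> c - 2 * (c * d + inverse L) * inverse k"
    and "D \<equiv> nat \<lceil>c * d * L\<rceil>" and "M \<equiv> nat \<lceil>c * k * L\<rceil>"
  assumes "0 < c" "0 < d" "1 \<le> L" "1 \<le> k" "0 < w"
  shows "2 * D < M" "k * real D / (real M - 2 * real D) \<le> u / w"
proof -
  have "real D \<le> c * d * L + 1" "c * k * L \<le> real M"
    using assms(5-7) real_nat_ceiling_ge[of "c * k * L"] unfolding D_def M_def by simp_all
  moreover have "c * d * L + 1 = L * u" unfolding u_def using assms(7) by (simp add: field_simps)
  ultimately have DM: "real D \<le> L * u" "c * k * L \<le> real M" by simp_all
  have "k * L * w = c * k * L - 2 * (L * u)"
    unfolding w_def u_def using assms(8) by (simp add: field_simps)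
  then have gap: "k * L * w \<le> real M - 2 * real D" using DM by linarith
  moreover have "0 < k * L * w" using assms(7-9) by simp
  ultimately have pos: "0 < real M - 2 * real D" by linarith
  then show "2 * D < M" by linarith
  have "k * real D \<le> k * (L * u)"
    using DM(1) assms(8) by (intro mult_left_mono) simp_all
  also have "\<dots> = k * L * w * (u / w)"
    using assms(9) by simp
  also have "\<dots> \<le> (real M - 2 * real D) * (u / w)"
    using gap assms(5-9) unfolding u_def by (intro mult_right_mono) simp_all
  finally have "k * real D \<le> u / w * (real M - 2 * real D)"
    by (simp only: mult.commute)
  then show "k * real D / (real M - 2 * real D) \<le> u / w"
    by (simp only: pos_divide_le_eq[OF pos])
qed

lemma eventually_design_ratio_le:
  fixes k :: "nat \<Rightarrow> nat"
  assumes k: "(\<lambda>n. real (k n)) \<sim>[at_top] (\<lambda>n. real n powr \<theta>)" "0 < \<theta>" "\<theta> < 1"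
    and "0 < c" "0 < d" "d < d'"
  shows "eventually (\<lambda>n. let L = ln (real n / real (k n)); D = nat \<lceil>c * d * L\<rceil>;
                            M = nat \<lceil>c * real (k n) * L\<rceil>
         in k n < n \<and> 2 * D < M \<and> real (k n) * real D / (real M - 2 * real D) \<le> d') at_top"
proof -
  let ?L = "\<lambda>n. ln (real n / real (k n))"
  have L: "filterlim ?L at_top at_top" by (rule filterlim_ln_ratio_at_top[OF k(1,3)])
  have K: "filterlim (\<lambda>n. real (k n)) at_top at_top"
    by (rule filterlim_at_top_of_asymp_equiv_powr[OF k(1,2)])
  define u where "u n = c * d + inverse (?L n)" for n
  define w where "w n = c - 2 * (c * d + inverse (?L n)) * inverse (real (k n))" for n
  have u: "(u \<longlongrightarrow> c * d) at_top"
    using tendsto_add[OF tendsto_const tendsto_inverse_0_at_top[OF L], of "c * d"]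
    unfolding u_def by simp
  have w: "(w \<longlongrightarrow> c) at_top"
    using tendsto_diff[OF tendsto_const tendsto_mult[OF tendsto_mult[OF tendsto_const u]
                                                        tendsto_inverse_0_at_top[OF K]], of c 2]
    unfolding w_def u_def by simp
  have "((\<lambda>n. u n / w n) \<longlongrightarrow> d) at_top"
    using tendsto_divide[OF u w] assms(4) by simp
  then have "eventually (\<lambda>n. u n / w n < d') at_top" using assms(6) by (rule order_tendstoD)
  moreover have "eventually (\<lambda>n. 0 < w n) at_top" using w assms(4) by (rule order_tendstoD)
  moreover have "eventually (\<lambda>n. 1 \<le> ?L n) at_top" using L by (simp add: filterlim_at_top)
  moreover have "eventually (\<lambda>n. 1 \<le> real (k n)) at_top" using K unfolding filterlim_at_top by blast
  ultimately show ?thesis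
  proof eventually_elim
    case (elim n)
    have "k n < n"
    proof -
      have "n \<noteq> 0" using elim(3) by (cases "n = 0") auto
      then have ratio: "0 < real n / real (k n)" using elim(4) by simp
      have "0 < ln (real n / real (k n))" using elim(3) by simp
      then have "1 < real n / real (k n)" using ln_gt_zero_iff[OF ratio] by simp
      then show ?thesis using elim(4) by (simp add: less_divide_eq)
    qed
    then show ?case
      using ceiling_design_ratio_le[of c d "?L n" "real (k n)"] elim assms(4,5)
      unfolding Let_def u_def w_def by fastforce
  qed
qed

lemma power_le_exp_neg_mult:
  assumes "0 \<le> x" "x \<le> exp (- E)" "0 \<le> E" "t \<le> real D"
  shows "x ^ D \<le> exp (- E * t)"
proof -
  have "x ^ D \<le> exp (- E) ^ D" by (rule power_mono[OF assms(2,1)])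
  also have "\<dots> = exp (- E * real D)" by (simp add: exp_of_nat_mult[symmetric] mult.commute)
  also have "\<dots> \<le> exp (- E * t)" using assms(3,4) by (simp add: mult_left_mono)
  finally show ?thesis .
qed

lemma eventually_failure_prob_le:
  fixes k :: "nat \<Rightarrow> nat"
  assumes k: "(\<lambda>n. real (k n)) \<sim>[at_top] (\<lambda>n. real n powr \<theta>)" "0 < \<theta>" "\<theta> < 1"
    and "0 < q" "q < 1" "0 < c" "0 < d" "d < d'" "l1 \<le> 0" "0 \<le> l2" "0 \<le> E1" "0 \<le> E2"
    and infected: "chernoff_factor l1 \<alpha> q \<le> exp (- E1)"
    and healthy: "\<And>\<pi>. exp (- d') \<le> \<pi> \<Longrightarrow> chernoff_factor l2 \<alpha> (\<pi> + (1 - \<pi>) * q) \<le> exp (- E2)"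
  shows "eventually (\<lambda>n. 1 - success_prob n (k n) (nat \<lceil>c * real (k n) * ln (real n / real (k n))\<rceil>)
                             (nat \<lceil>c * d * ln (real n / real (k n))\<rceil>) q \<alpha>
           \<le> real (k n) * exp (- (c * d * E1) * ln (real n / real (k n)))
             + real n * exp (- (c * d * E2) * ln (real n / real (k n)))) at_top"
  using eventually_design_ratio_le[OF k assms(6-8)]
proof eventually_elim
  case (elim n)
  define L where "L = ln (real n / real (k n))"
  define D where "D = nat \<lceil>c * d * L\<rceil>"
  define M where "M = nat \<lceil>c * real (k n) * L\<rceil>"
  define \<pi> where "\<pi> = (1 - real D / real (M - D)) ^ k n"
  have design: "k n \<le> n" "2 * D < M" "real (k n) * real D / (real M - 2 * real D) \<le> d'"
    using elim unfolding Let_def L_def[symmetric] D_def[symmetric] M_def[symmetric] by auto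
  have D: "c * d * L \<le> real D" unfolding D_def by linarith
  have "exp (- d') \<le> \<pi>"
    using exp_neg_le_power_one_minus_ratio[OF design(2), of "k n"] design(3) unfolding \<pi>_def
    by (meson exp_le_cancel_iff neg_le_iff_le order_trans)
  then have "chernoff_factor l2 \<alpha> (\<pi> + (1 - \<pi>) * q) ^ D \<le> exp (- E2 * (c * d * L))"
    using power_one_minus_ratio_bounds[OF design(2), of "k n"] assms(4,5,12) D unfolding \<pi>_def
    by (intro power_le_exp_neg_mult healthy chernoff_factor_mix_nonneg) auto
  moreover have "chernoff_factor l1 \<alpha> q ^ D \<le> exp (- E1 * (c * d * L))"
    using assms(4,5,11) D infected by (intro power_le_exp_neg_mult chernoff_factor_nonneg) auto
  ultimately have "real (k n) * chernoff_factor l1 \<alpha> q ^ D + real n * chernoff_factor l2 \<alpha> (\<pi> + (1 - \<pi>) * q) ^ D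
      \<le> real (k n) * exp (- (c * d * E1) * L) + real n * exp (- (c * d * E2) * L)"
    by (intro add_mono mult_left_mono) (auto simp: algebra_simps)
  then show ?case
    using one_minus_success_prob_le[OF design(1,2), of q l1 l2 \<alpha>] assms(4,5,9,10)
    unfolding L_def[symmetric] D_def[symmetric] M_def[symmetric] \<pi>_def by simp
qed

lemma failure_bound_tendsto_zero:
  assumes k: "(\<lambda>n. real (k n)) \<sim>[at_top] (\<lambda>n. real n powr \<theta>)"
    and "0 \<le> a" "\<theta> < (1 - \<theta>) * a" "0 \<le> b" "1 < (1 - \<theta>) * b"
  shows "((\<lambda>n. real (k n) * exp (- a * ln (real n / real (k n)))
             + real n * exp (- b * ln (real n / real (k n)))) \<longlongrightarrow> 0) at_top"
proof (intro tendsto_add_zero tendsto_zero_mult_exp_neg_ln_ratio[OF k])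
  show "eventually (\<lambda>n. 0 \<le> real (k n) \<and> real (k n) \<le> 2 * real n powr \<theta>) at_top"
    using eventually_bounds_of_asymp_equiv_powr[OF k] by eventually_elim simp
  show "eventually (\<lambda>n. 0 \<le> real n \<and> real n \<le> 1 * real n powr 1) at_top" by simp
qed (use assms in auto)

theorem corollary2p7:
  fixes q \<theta> \<epsilon> c :: real and k :: "nat \<Rightarrow> nat"
  assumes "0 < q" "q < 1" "0 < \<theta>" "\<theta> < 1" "\<epsilon> > 0"
    and "(\<lambda>n. real (k n)) \<sim>[at_top] (\<lambda>n. real n powr \<theta>)"
    and "c > (1 + \<epsilon>) * mCOMP_coeff \<theta> q"
  shows "\<exists>\<alpha> d. admissible q \<alpha> d \<and>
           ((\<lambda>n. success_prob n (k n)
                    (nat \<lceil>c * real (k n) * ln (real n / real (k n))\<rceil>)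
                    (nat \<lceil>c * d * ln (real n / real (k n))\<rceil>) q \<alpha>)
             \<longlongrightarrow> 1) at_top"
proof -
  obtain \<alpha> d where adm: "admissible q \<alpha> d" and b: "b1 \<theta> q \<alpha> d < c" "b2 \<theta> q \<alpha> d < c"
    using exists_admissible_b1_b2_less[OF assms(1-5,7)] .
  note bounds = admissible_bounds[OF adm assms(1,2)]
  have c: "0 < c" using b1_pos[OF adm assms(1-4)] b(1) by simp
  obtain E where E: "0 < E" "E < DKL \<alpha> (exp (- d) + (1 - exp (- d)) * q)" "1 < (1 - \<theta>) * (c * d * E)"
    using b2_less_imp_exponent[OF adm assms(1,2,4) b(2)] .
  obtain l1 where l1: "l1 \<le> 0" "chernoff_factor l1 \<alpha> q = exp (- DKL \<alpha> q)"
    using infected_chernoff_exponent[OF adm assms(1,2)] .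
  obtain l2 d' where l2: "0 \<le> l2" "d < d'"
    "\<And>\<pi>. exp (- d') \<le> \<pi> \<Longrightarrow> chernoff_factor l2 \<alpha> (\<pi> + (1 - \<pi>) * q) \<le> exp (- E)"
    using healthy_chernoff_exponent[OF adm assms(1,2) E(2)] by blast
  let ?L = "\<lambda>n. ln (real n / real (k n))"
  let ?bound = "\<lambda>n. real (k n) * exp (- (c * d * DKL \<alpha> q) * ?L n) + real n * exp (- (c * d * E) * ?L n)"
  let ?success = "\<lambda>n. success_prob n (k n) (nat \<lceil>c * real (k n) * ?L n\<rceil>) (nat \<lceil>c * d * ?L n\<rceil>) q \<alpha>"
  have "eventually (\<lambda>n. 1 - ?success n \<le> ?bound n) at_top"
    using l1 l2 E(1) bounds by (intro eventually_failure_prob_le[OF assms(6,3,4,1,2) c]) auto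
  then have "eventually (\<lambda>n. 1 - ?bound n \<le> ?success n) at_top" by (simp add: algebra_simps)
  moreover have "eventually (\<lambda>n. ?success n \<le> 1) at_top" by (simp add: success_prob_def)
  moreover have "(?bound \<longlongrightarrow> 0) at_top"
    using b(1) b1_less_iff[OF adm assms(1,2,4)] c bounds E
    by (intro failure_bound_tendsto_zero[OF assms(6)]) auto
  then have "((\<lambda>n. 1 - ?bound n) \<longlongrightarrow> 1) at_top" by (auto intro: tendsto_eq_intros)
  ultimately have "(?success \<longlongrightarrow> 1) at_top" by (rule tendsto_sandwich[OF _ _ _ tendsto_const])
  then show ?thesis using adm by blast
qed

end
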